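(* Let $S_n(x)=(18n+24)\sin(x)-(9n+27)\sin((n+1)x)+9n\sin((n+2)x)+2\sin(4x)-\sin(5x)$. For every integer $n\geq 21$ and every $x\in\bigl(2.5/(n+2),\,2\pi/3\bigr)$ one has $S_n(x)>0$. *)

theory Defs
  imports Complex_Main
begin

definition S :: "nat \<Rightarrow> real \<Rightarrow> real" where
  "S n x = (18 * real n + 24) * sin x - (9 * real n + 27) * sin ((real n + 1) * x)
           + 9 * real n * sin ((real n + 2) * x) + 2 * sin (4 * x) - sin (5 * x)"

end

theory Submission
  imports Defs
begin

text \<open>
  Put \<open>m = n + 3/2\<close>. Sum-to-product turns \<open>S n x\<close> into
  \<open>18 m sin(x/2) (2 cos(x/2) + cos(m x)) - 27 cos(x/2) sin(m x) + R x\<close>, where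
  \<open>R x = -3 sin x + 2 sin(4x) - sin(5x)\<close> does not depend on \<open>n\<close>. Minimising
  \<open>a cos u - b sin u\<close> over the phase \<open>u = m x\<close> gives a lower bound for \<open>S n x\<close> in terms of the
  half angle only, and Taylor bounds show it is positive unless \<open>x = 2\<pi>/3 - h\<close> with \<open>m h < 1/5\<close>.
  There the phase \<open>m x\<close> is fixed modulo \<open>2\<pi>\<close> by \<open>n mod 3\<close>: if \<open>3\<close> does not divide \<open>n\<close>, then
  \<open>cos(m x) \<ge> 0\<close> and the first term dominates; if it does, \<open>m x \<equiv> \<pi> - m h\<close>, the terms of
  order \<open>m h\<close> cancel exactly and what is left is of order \<open>m\<^sup>3 h\<^sup>2\<close>.
\<close>

lemma cos_x_ge_1_minus_x2_div_2: "1 - x ^ 2 / 2 \<le> cos (x::real)"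
proof -
  have "sin (x/2) ^ 2 \<le> (x/2) ^ 2"
    using abs_sin_x_le_abs_x[of "x/2"] by (metis abs_le_square_iff)
  then show ?thesis
    using cos_double_sin[of "x/2"] by (simp add: power_divide)
qed

lemma sin_x_ge_x_minus_x3_div_6:
  fixes x :: real
  assumes "0 \<le> x"
  shows "x - x ^ 3 / 6 \<le> sin x"
proof -
  let ?f = "\<lambda>t::real. sin t - t + t ^ 3 / 6"
  have "?f 0 \<le> ?f x"
  proof (rule DERIV_nonneg_imp_nondecreasing[OF assms])
    fix t :: real
    have "(?f has_real_derivative (cos t - 1 + t ^ 2 / 2)) (at t)"
      by (auto intro!: derivative_eq_intros simp: power2_eq_square power3_eq_cube)
    then show "\<exists>d. (?f has_real_derivative d) (at t) \<and> 0 \<le> d"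
      using cos_x_ge_1_minus_x2_div_2[of t] by force
  qed
  then show ?thesis by simp
qed

lemma pi_less_3_15: "pi < 3.15"
proof (rule ccontr)
  assume "\<not> pi < 3.15"
  then have "sin 0.525 \<le> sin (pi/6)"
    by (intro sin_monotone_2pi_le) auto
  moreover have "0.525 - 0.525 ^ 3 / 6 \<le> sin (0.525::real)"
    by (rule sin_x_ge_x_minus_x3_div_6) simp
  ultimately show False
    by (simp add: sin_30 power3_eq_cube)
qed

lemma sqrt_3_bounds: "1732/1000 \<le> sqrt 3" "sqrt 3 \<le> (17321/10000::real)"
  by (rule real_le_rsqrt real_le_lsqrt; simp add: power2_eq_square)+

lemma mult_cos_minus_mult_sin_ge:
  fixes a b u :: real
  assumes "0 < a"
  shows "- a - b ^ 2 / (2 * a) \<le> a * cos u - b * sin u"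
proof -
  have "2 * a * (a * cos u - b * sin u + a + b ^ 2 / (2 * a))
          = 2 * a * (a * cos u - b * sin u) + 2 * a ^ 2 + b ^ 2"
    using assms by (simp add: field_simps power2_eq_square)
  also have "\<dots> = (a * sin u - b) ^ 2 + a ^ 2 * (1 + cos u) ^ 2"
    using sin_cos_squared_add[of u] by algebra
  finally have "0 \<le> 2 * a * (a * cos u - b * sin u + a + b ^ 2 / (2 * a))"
    by simp
  then show ?thesis
    using assms by (simp add: zero_le_mult_iff)
qed

definition S_rest :: "real \<Rightarrow> real" where
  "S_rest x = - 3 * sin x + 2 * sin (4 * x) - sin (5 * x)"

lemma S_half_angle_form:
  fixes n :: nat and x :: real
  defines "m \<equiv> real n + 3 / 2"
  shows "S n x = 18 * m * sin (x/2) * (2 * cos (x/2) + cos (m * x))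
                 - 27 * cos (x/2) * sin (m * x) + S_rest x"
proof -
  have "(real n + 1) * x = m * x - x/2" "(real n + 2) * x = m * x + x/2"
    unfolding m_def by (simp_all add: algebra_simps)
  then have "S n x = (18 * m - 3) * sin x - (9 * m + 27/2) * sin (m * x - x/2)
                     + (9 * m - 27/2) * sin (m * x + x/2) + 2 * sin (4 * x) - sin (5 * x)"
    unfolding S_def by (simp add: m_def algebra_simps)
  also have "\<dots> = 18 * m * sin (x/2) * (2 * cos (x/2) + cos (m * x))
                   - 27 * cos (x/2) * sin (m * x) + S_rest x"
    using sin_double[of "x/2"] by (simp add: sin_diff sin_add S_rest_def algebra_simps)
  finally show ?thesis .
qed

lemma S_ge_half_angle_bound:
  fixes n :: nat and x :: real
  defines "m \<equiv> real n + 3 / 2"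
  assumes "0 < sin (x/2)"
  shows "18 * m * (sin x - sin (x/2)) - 81/4 * cos (x/2) ^ 2 / (m * sin (x/2)) + S_rest x
           \<le> S n x"
proof -
  have m: "0 < m" unfolding m_def by simp
  have "- (18 * m * sin (x/2)) - (27 * cos (x/2)) ^ 2 / (2 * (18 * m * sin (x/2)))
          \<le> 18 * m * sin (x/2) * cos (m * x) - 27 * cos (x/2) * sin (m * x)"
    by (rule mult_cos_minus_mult_sin_ge) (use m assms(2) in simp)
  moreover have "(27 * cos (x/2)) ^ 2 / (2 * (18 * m * sin (x/2)))
                   = 81/4 * cos (x/2) ^ 2 / (m * sin (x/2))"
    using m assms(2) by (simp add: power2_eq_square field_simps)
  moreover have "sin x = 2 * sin (x/2) * cos (x/2)"
    using sin_double[of "x/2"] by simp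
  ultimately show ?thesis
    unfolding S_half_angle_form[of n x, folded m_def] by (simp add: algebra_simps)
qed

lemma S_rest_ge:
  assumes "0 \<le> x"
  shows "- (64/3) * x ^ 3 \<le> S_rest x"
proof -
  have "4 * x - (4 * x) ^ 3 / 6 \<le> sin (4 * x)"
    using sin_x_ge_x_minus_x3_div_6[of "4 * x"] assms by simp
  moreover have "sin x \<le> x" "sin (5 * x) \<le> 5 * x"
    using sin_x_le_x assms by simp_all
  ultimately show ?thesis
    unfolding S_rest_def by (simp add: power_mult_distrib)
qed

lemma S_rest_2pi_3_minus:
  "S_rest (2*pi/3 - h) = sqrt 3 / 2 * (2 * cos (4 * h) + cos (5 * h) - 3 * cos h) + S_rest h / 2"
proof -
  have "sin (4 * (2*pi/3 - h)) = sin ((2*pi/3 - 4 * h) + 2 * pi)"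
    by (rule arg_cong[where f = sin]) (simp add: field_simps)
  also have "\<dots> = sqrt 3 / 2 * cos (4 * h) + sin (4 * h) / 2"
    by (simp only: sin_periodic sin_diff sin_120 cos_120)
  finally have s4: "sin (4 * (2*pi/3 - h)) = sqrt 3 / 2 * cos (4 * h) + sin (4 * h) / 2" .
  have "sin (5 * (2*pi/3 - h)) = sin ((- (2*pi/3 + 5 * h) + 2 * pi) + 2 * pi)"
    by (rule arg_cong[where f = sin]) (simp add: field_simps)
  also have "\<dots> = sin (5 * h) / 2 - sqrt 3 / 2 * cos (5 * h)"
    by (simp only: sin_periodic sin_minus sin_add sin_120 cos_120) simp
  finally have s5: "sin (5 * (2*pi/3 - h)) = sin (5 * h) / 2 - sqrt 3 / 2 * cos (5 * h)" .
  show ?thesis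
    unfolding S_rest_def s4 s5 sin_diff[of "2*pi/3"] sin_120 cos_120 by (simp add: field_simps)
qed

lemma S_rest_near_2pi_3_ge:
  assumes "0 \<le> h" "h \<le> 3/10"
  shows "- 28 * h ^ 2 \<le> S_rest (2*pi/3 - h)"
proof -
  define C where "C = 2 * cos (4 * h) + cos (5 * h) - 3 * cos h"
  have "1 - 8 * h ^ 2 \<le> cos (4 * h)" "1 - 25/2 * h ^ 2 \<le> cos (5 * h)"
    using cos_x_ge_1_minus_x2_div_2[of "4 * h"] cos_x_ge_1_minus_x2_div_2[of "5 * h"]
    by (simp_all add: power_mult_distrib)
  then have "- 57/2 * h ^ 2 \<le> C"
    unfolding C_def using cos_le_one[of h] by linarith
  then have "sqrt 3 / 2 * (- 57/2 * h ^ 2) \<le> sqrt 3 / 2 * C"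
    by (rule mult_left_mono) simp
  then have "- 57/4 * (sqrt 3 * h ^ 2) \<le> sqrt 3 / 2 * C"
    by (simp add: mult_ac)
  moreover have "sqrt 3 * h ^ 2 \<le> 17321/10000 * h ^ 2"
    by (rule mult_right_mono) (use sqrt_3_bounds in auto)
  moreover have "h ^ 3 \<le> 3/10 * h ^ 2"
    using mult_right_mono[OF assms(2), of "h ^ 2"] by (simp add: power3_eq_cube power2_eq_square)
  ultimately show ?thesis
    using S_rest_ge[OF assms(1)] zero_le_power2[of h]
    unfolding S_rest_2pi_3_minus C_def[symmetric] by linarith
qed

lemma half_angle_2pi_3_minus:
  "sin ((2*pi/3 - h) / 2) = sqrt 3 / 2 * cos (h/2) - sin (h/2) / 2"
  "cos ((2*pi/3 - h) / 2) = cos (h/2) / 2 + sqrt 3 / 2 * sin (h/2)"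
proof -
  have e: "(2*pi/3 - h) / 2 = pi/3 - h/2" by simp
  show "sin ((2*pi/3 - h) / 2) = sqrt 3 / 2 * cos (h/2) - sin (h/2) / 2"
    unfolding e sin_diff cos_60 sin_60 by simp
  show "cos ((2*pi/3 - h) / 2) = cos (h/2) / 2 + sqrt 3 / 2 * sin (h/2)"
    unfolding e cos_diff cos_60 sin_60 by simp
qed

lemma two_cos_half_2pi_3_minus_ge:
  assumes "0 \<le> h"
  shows "sqrt 3 * h / 2 - h ^ 2 / 8 - sqrt 3 * h ^ 3 / 48 \<le> 2 * cos ((2*pi/3 - h) / 2) - 1"
proof -
  have "1 - h ^ 2 / 8 \<le> cos (h/2)"
    using cos_x_ge_1_minus_x2_div_2[of "h/2"] by (simp add: power_divide)
  moreover have "sqrt 3 * (h/2 - h ^ 3 / 48) \<le> sqrt 3 * sin (h/2)"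
    using sin_x_ge_x_minus_x3_div_6[of "h/2"] assms by (simp add: power_divide)
  ultimately show ?thesis
    unfolding half_angle_2pi_3_minus by (simp add: algebra_simps)
qed

lemma sin_half_2pi_3_minus_ge:
  assumes "0 \<le> h" "h \<le> 2"
  shows "sqrt 3 / 2 - h / 2 \<le> sin ((2*pi/3 - h) / 2)"
proof -
  have "sqrt 3 / 2 * (1 - h ^ 2 / 8) \<le> sqrt 3 / 2 * cos (h/2)"
    using cos_x_ge_1_minus_x2_div_2[of "h/2"] by (intro mult_left_mono) (simp_all add: power_divide)
  moreover have "h ^ 2 \<le> 2 * h"
    using mult_right_mono[OF assms(2,1)] by (simp add: power2_eq_square)
  then have "sqrt 3 * h ^ 2 \<le> 2 * (2 * h)"
    using sqrt_3_bounds(2) by (intro mult_mono) auto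
  moreover have "sin (h/2) \<le> h/2"
    using sin_x_le_x[of "h/2"] assms by simp
  ultimately show ?thesis
    unfolding half_angle_2pi_3_minus by (simp add: algebra_simps)
qed

lemma cos_half_2pi_3_minus_le:
  assumes "0 \<le> h"
  shows "cos ((2*pi/3 - h) / 2) \<le> 1/2 + h/2"
proof -
  have "sqrt 3 / 2 * sin (h/2) \<le> sqrt 3 / 2 * \<bar>sin (h/2)\<bar>"
    by (intro mult_left_mono) auto
  also have "\<dots> \<le> \<bar>sin (h/2)\<bar>"
    using sqrt_3_bounds(2) by (intro mult_left_le_one_le) auto
  also have "\<dots> \<le> h/2"
    using abs_sin_x_le_abs_x[of "h/2"] assms by simp
  finally show ?thesis
    unfolding half_angle_2pi_3_minus using cos_le_one[of "h/2"] by linarith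
qed

lemma cos_half_2pi_3_minus_ge:
  assumes "0 \<le> h" "h \<le> 2/5"
  shows "49/100 \<le> cos ((2*pi/3 - h) / 2)"
proof -
  have "1 - h ^ 2 / 8 \<le> cos (h/2)"
    using cos_x_ge_1_minus_x2_div_2[of "h/2"] by (simp add: power_divide)
  moreover have "h ^ 2 \<le> 4/25"
    using power_mono[OF assms(2,1), of 2] by (simp add: power2_eq_square)
  moreover have "0 \<le> sqrt 3 / 2 * sin (h/2)"
    using assms pi_ge_two by (intro mult_nonneg_nonneg sin_ge_zero) auto
  ultimately show ?thesis
    unfolding half_angle_2pi_3_minus by linarith
qed

lemma sin_half_mult_two_cos_half_minus_one_ge:
  assumes "0 \<le> h" "h \<le> 1"
  shows "3/4 * h - 55/100 * h ^ 2 \<le> sin ((2*pi/3 - h) / 2) * (2 * cos ((2*pi/3 - h) / 2) - 1)"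
proof -
  define r where "r = sqrt 3"
  have r: "1732/1000 \<le> r" "r \<le> 17321/10000" "r * r = 3"
    unfolding r_def using sqrt_3_bounds by simp_all
  have h2: "h ^ 2 \<le> h" and h3: "h ^ 3 \<le> h"
    using power_decreasing[of 1 _ h] assms by simp_all
  define s0 where "s0 = r/2 - h/2"
  define t0 where "t0 = r * h / 2 - h ^ 2 / 8 - r * h ^ 3 / 48"
  have "s0 \<le> sin ((2*pi/3 - h) / 2)"
    unfolding s0_def r_def using assms by (intro sin_half_2pi_3_minus_ge) auto
  moreover have "t0 \<le> 2 * cos ((2*pi/3 - h) / 2) - 1"
    unfolding t0_def r_def using assms(1) by (rule two_cos_half_2pi_3_minus_ge)
  moreover have "0 \<le> s0"
    unfolding s0_def using r assms by simp
  moreover have "r * h ^ 3 \<le> 2 * h"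
    using r h3 assms by (intro mult_mono) auto
  then have "0 \<le> t0"
    unfolding t0_def using r h2 assms mult_right_mono[OF r(1) assms(1)] by linarith
  ultimately have "s0 * t0 \<le> sin ((2*pi/3 - h) / 2) * (2 * cos ((2*pi/3 - h) / 2) - 1)"
    by (intro mult_mono) auto
  moreover have "s0 * t0 = (r * r) * (h/4 - h ^ 3 / 96) - 5/16 * (r * h ^ 2) + h ^ 3 / 16 + r * h ^ 4 / 96"
    unfolding s0_def t0_def by (simp add: field_simps power2_eq_square power3_eq_cube power4_eq_xxxx)
  then have "s0 * t0 = 3/4 * h - 5/16 * (r * h ^ 2) + h ^ 3 / 32 + r * h ^ 4 / 96"
    unfolding r(3) by simp
  moreover have "r * h ^ 2 \<le> 17321/10000 * h ^ 2"
    using r by (intro mult_right_mono) auto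
  moreover have "0 \<le> h ^ 2" "0 \<le> h ^ 3" "0 \<le> r * h ^ 4"
    using r assms by simp_all
  ultimately show ?thesis
    by linarith
qed

lemma two_cos_half_2pi_3_minus_ge_linear:
  assumes "0 \<le> h" "h \<le> 3/10"
  shows "82/100 * h \<le> 2 * cos ((2*pi/3 - h) / 2) - 1"
proof -
  have h2: "h ^ 2 \<le> 3/10 * h"
    using mult_right_mono[OF assms(2,1)] by (simp add: power2_eq_square)
  have "h ^ 3 \<le> 3/10 * h ^ 2"
    using mult_right_mono[OF assms(2), of "h ^ 2"] by (simp add: power3_eq_cube power2_eq_square)
  then have "h ^ 3 \<le> 9/100 * h"
    using h2 by linarith
  then have "sqrt 3 * h ^ 3 \<le> 2 * (9/100 * h)"
    using sqrt_3_bounds(2) assms by (intro mult_mono) auto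
  moreover note h2
  moreover have "1732/1000 * h \<le> sqrt 3 * h"
    using sqrt_3_bounds(1) assms by (intro mult_right_mono) auto
  ultimately show ?thesis
    using two_cos_half_2pi_3_minus_ge[OF assms(1)] assms by linarith
qed

lemma cos_9_10_le: "cos (9/10::real) \<le> 6219/10000"
proof -
  have "(4348/10000::real) \<le> sin (9/20)"
    using sin_x_ge_x_minus_x3_div_6[of "9/20"] by (simp add: power3_eq_cube)
  then have "(4348/10000::real) ^ 2 \<le> sin (9/20) ^ 2"
    by (rule power_mono) simp
  then show ?thesis
    using cos_double_sin[of "9/20::real"] by (simp add: power2_eq_square)
qed

lemma S_pos_small_x:
  assumes "21 \<le> n" "5/2 < (real n + 2) * x" "x \<le> 2/5"
  shows "0 < S n x"
proof -
  define m where "m = real n + 3/2"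
  have "0 < (real n + 2) * x"
    using assms(2) by linarith
  then have x: "0 < x"
    by (simp add: zero_less_mult_iff)
  have "45/46 * (real n + 2) \<le> m"
    using assms(1) unfolding m_def by simp
  then have "45/46 * ((real n + 2) * x) \<le> m * x"
    using mult_right_mono[of _ _ x] x by (simp add: mult.assoc)
  then have m: "45/2 \<le> m" "244/100 \<le> m * x"
    using assms(1,2) unfolding m_def by simp_all
  have "x ^ 2 \<le> 4/25"
    using power_mono[OF assms(3), of 2] x by (simp add: power2_eq_square)
  then have x3: "x ^ 3 \<le> 4/25 * x"
    using mult_right_mono[of "x ^ 2" "4/25" x] x by (simp add: power3_eq_cube power2_eq_square)
  have "x/2 - x ^ 3 / 48 \<le> sin (x/2)"
    using sin_x_ge_x_minus_x3_div_6[of "x/2"] x by (simp add: power_divide)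
  then have s: "49/100 * x \<le> sin (x/2)"
    using x3 x by linarith
  have "71/150 * x \<le> sin x - sin (x/2)"
    using sin_x_ge_x_minus_x3_div_6[of x] sin_x_le_x[of "x/2"] x x3 by simp
  then have "18 * m * (71/150 * x) \<le> 18 * m * (sin x - sin (x/2))"
    using m by (intro mult_left_mono) auto
  then have A: "20 < 18 * m * (sin x - sin (x/2))"
    using m by (simp add: algebra_simps)
  have "49/100 * (244/100) \<le> m * (49/100 * x)"
    using m by simp
  also have "\<dots> \<le> m * sin (x/2)"
    using s m by (intro mult_left_mono) auto
  finally have "81/4 * cos (x/2) ^ 2 / (m * sin (x/2)) \<le> (81/4) / (49/100 * (244/100))"
    by (intro frac_le) (auto simp: abs_square_le_1)
  then have B: "81/4 * cos (x/2) ^ 2 / (m * sin (x/2)) < 17"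
    by simp
  have "- (64/3) * x ^ 3 \<le> S_rest x"
    using S_rest_ge x by simp
  then have C: "- 2 < S_rest x"
    using x3 assms(3) by linarith
  show ?thesis
    using S_ge_half_angle_bound[of x n] s x A B C unfolding m_def by linarith
qed

lemma sin_minus_sin_half: "sin x - sin (x/2::real) = sin (x/2) * (2 * cos (x/2) - 1)"
  using sin_double[of "x/2"] by (simp add: algebra_simps)

lemma S_pos_middle_x:
  assumes "21 \<le> n" "2/5 \<le> x" "x \<le> 9/5"
  shows "0 < S n x"
proof -
  define m where "m = real n + 3/2"
  have m: "45/2 \<le> m"
    using assms unfolding m_def by simp
  have "1/5 - (1/5) ^ 3 / 6 \<le> sin (1/5::real)"
    by (rule sin_x_ge_x_minus_x3_div_6) simp
  moreover have "sin (1/5) \<le> sin (x/2)"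
    using assms pi_ge_two by (intro sin_monotone_2pi_le) auto
  ultimately have s: "1986/10000 \<le> sin (x/2)"
    by (simp add: power3_eq_cube)
  have "1 - (9/10) ^ 2 / 2 \<le> cos (9/10::real)"
    by (rule cos_x_ge_1_minus_x2_div_2)
  moreover have "cos (9/10) \<le> cos (x/2)"
    using assms pi_ge_two by (intro cos_monotone_0_pi_le) auto
  ultimately have c: "595/1000 \<le> cos (x/2)"
    by (simp add: power2_eq_square)
  have "18 * (45/2) * (1986/10000 * (19/100)) \<le> 18 * m * (sin x - sin (x/2))"
    unfolding sin_minus_sin_half using s c m
    by (intro mult_mono) (auto intro!: mult_mono)
  then have A: "15 < 18 * m * (sin x - sin (x/2))"
    by simp
  have "45/2 * (1986/10000) \<le> m * sin (x/2)"
    using s m by (intro mult_mono) auto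
  then have "81/4 * cos (x/2) ^ 2 / (m * sin (x/2)) \<le> (81/4) / (45/2 * (1986/10000))"
    by (intro frac_le) (auto simp: abs_square_le_1)
  then have B: "81/4 * cos (x/2) ^ 2 / (m * sin (x/2)) < 5"
    by simp
  have C: "- 6 \<le> S_rest x"
    unfolding S_rest_def using sin_le_one[of x] sin_ge_minus_one[of "4 * x"] sin_le_one[of "5 * x"]
    by linarith
  show ?thesis
    using S_ge_half_angle_bound[of x n] s A B C unfolding m_def by linarith
qed

lemma half_angle_bounds_above_9_5:
  assumes "9/5 \<le> x" "x \<le> 2*pi/3"
  shows "7785/10000 \<le> sin (x/2)" "cos (x/2) ^ 2 \<le> 3868/10000"
proof -
  have "9/10 - (9/10) ^ 3 / 6 \<le> sin (9/10::real)"
    by (rule sin_x_ge_x_minus_x3_div_6) simp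
  moreover have "sin (9/10) \<le> sin (x/2)"
    using assms pi_ge_two by (intro sin_monotone_2pi_le) auto
  ultimately show "7785/10000 \<le> sin (x/2)"
    by (simp add: power3_eq_cube)
  have "cos (x/2) \<le> cos (9/10)"
    using assms pi_ge_two by (intro cos_monotone_0_pi_le) auto
  moreover have "0 \<le> cos (x/2)"
    using assms pi_ge_two by (intro cos_ge_zero) auto
  ultimately show "cos (x/2) ^ 2 \<le> 3868/10000"
    using cos_9_10_le power_mono[of "cos (x/2)" "6219/10000" 2] by (simp add: power2_eq_square)
qed

lemma S_pos_large_x:
  assumes "21 \<le> n" "9/5 \<le> x" "x < 2*pi/3" "1/5 \<le> (real n + 3/2) * (2*pi/3 - x)"
  shows "0 < S n x"
proof -
  define m where "m = real n + 3/2"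
  define h where "h = 2*pi/3 - x"
  have x: "x = 2*pi/3 - h"
    unfolding h_def by simp
  have m: "45/2 \<le> m" "1/5 \<le> m * h"
    using assms unfolding m_def h_def by simp_all
  have h: "0 < h" "h \<le> 3/10"
    using assms pi_less_3_15 unfolding h_def by simp_all
  have s: "7785/10000 \<le> sin (x/2)" and c: "cos (x/2) ^ 2 \<le> 3868/10000"
    using half_angle_bounds_above_9_5 assms(2,3) by simp_all
  have "82/100 * h \<le> 2 * cos (x/2) - 1"
    using two_cos_half_2pi_3_minus_ge_linear[of h] h unfolding x by simp
  then have "7785/10000 * (82/100 * h) \<le> sin (x/2) * (2 * cos (x/2) - 1)"
    using s h by (intro mult_mono) auto
  then have "18 * m * (638/1000 * h) \<le> 18 * m * (sin x - sin (x/2))"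
    unfolding sin_minus_sin_half using m h by (intro mult_left_mono) auto
  then have A: "11484/1000 * (m * h) \<le> 18 * m * (sin x - sin (x/2))"
    by (simp add: algebra_simps)
  have "45/2 * (7785/10000) \<le> m * sin (x/2)"
    using s m by (intro mult_mono) auto
  then have "81/4 * cos (x/2) ^ 2 / (m * sin (x/2)) \<le> (81/4 * (3868/10000)) / (45/2 * (7785/10000))"
    using c by (intro frac_le) auto
  then have B: "81/4 * cos (x/2) ^ 2 / (m * sin (x/2)) < 1/2"
    by simp
  have "- 28 * h ^ 2 \<le> S_rest x"
    unfolding x using h by (intro S_rest_near_2pi_3_ge) auto
  moreover have "45/2 * h \<le> m * h"
    using m h by (intro mult_right_mono) auto
  moreover have "h ^ 2 \<le> 3/10 * h"
    using mult_right_mono[OF h(2), of h] h by (simp add: power2_eq_square)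
  ultimately have C: "- 38/100 * (m * h) \<le> S_rest x"
    using h by linarith
  show ?thesis
    using S_ge_half_angle_bound[of x n] s m A B C unfolding m_def by linarith
qed

lemma S_pos_if_cos_nonneg:
  assumes "21 \<le> n" "0 \<le> cos ((real n + 3/2) * x)" "4/5 \<le> sin (x/2)" "49/100 \<le> cos (x/2)"
  shows "0 < S n x"
proof -
  define m where "m = real n + 3/2"
  define u where "u = m * x"
  have ms: "45/2 * (4/5) \<le> m * sin (x/2)"
    using assms unfolding m_def by (intro mult_mono) auto
  have cs: "2 * (49/100) \<le> 2 * cos (x/2) + cos u"
    using assms unfolding u_def m_def by simp
  have "45/2 * (4/5) * (2 * (49/100)) \<le> m * sin (x/2) * (2 * cos (x/2) + cos u)"
    using ms by (intro mult_mono[OF ms cs]) simp_all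
  moreover have "cos (x/2) * sin u \<le> 1"
    using abs_cos_le_one[of "x/2"] abs_sin_le_one[of u]
    by (metis abs_ge_self abs_mult mult_le_one abs_ge_zero order_trans)
  moreover have "- 6 \<le> S_rest x"
    unfolding S_rest_def using sin_le_one[of x] sin_ge_minus_one[of "4 * x"] sin_le_one[of "5 * x"]
    by linarith
  ultimately show ?thesis
    unfolding S_half_angle_form[of n x] m_def[symmetric] u_def[symmetric] by (simp add: algebra_simps)
qed

lemma one_minus_cos_ge:
  fixes v :: real
  assumes "0 \<le> v" "v \<le> 1/5"
  shows "49/100 * v ^ 2 \<le> 1 - cos v"
proof -
  have "v ^ 3 \<le> v / 25"
    using mult_left_mono[OF power_mono[OF assms(2) assms(1), of 2] assms(1)]
    by (simp add: power2_eq_square power3_eq_cube)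
  then have "495/1000 * v \<le> sin (v/2)"
    using sin_x_ge_x_minus_x3_div_6[of "v/2"] assms by (simp add: power_divide)
  then have "(495/1000 * v) ^ 2 \<le> sin (v/2) ^ 2"
    using assms by (intro power_mono) auto
  moreover have "(495/1000 * v) ^ 2 = 9801/40000 * v ^ 2"
    by (simp add: power2_eq_square)
  moreover have "cos v = 1 - 2 * sin (v/2) ^ 2"
    using cos_double_sin[of "v/2"] by simp
  ultimately show ?thesis
    using zero_le_power2[of v] by linarith
qed

lemma phase_2pi_3_minus:
  fixes n :: nat and h :: real
  defines "w \<equiv> (2 * real (n mod 3) + 3) * pi / 3 - (real n + 3/2) * h"
  shows "cos ((real n + 3/2) * (2*pi/3 - h)) = cos w"
    and "sin ((real n + 3/2) * (2*pi/3 - h)) = sin w"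
proof -
  have "real n = 3 * real (n div 3) + real (n mod 3)"
    by (metis div_mult_mod_eq of_nat_add of_nat_mult of_nat_numeral mult.commute)
  then have "(real n + 3/2) * (2*pi/3 - h) = w + 2 * real (n div 3) * pi"
    unfolding w_def by (simp add: algebra_simps)
  then show "cos ((real n + 3/2) * (2*pi/3 - h)) = cos w"
    and "sin ((real n + 3/2) * (2*pi/3 - h)) = sin w"
    by (simp_all add: cos_add sin_add)
qed

lemma S_2pi_3_minus_ge_if_phase_reflected:
  fixes n :: nat and h :: real
  defines "m \<equiv> real n + 3/2"
  assumes "0 < h" "h \<le> 1/100" "m * h \<le> 1/5"
    and cos_eq: "cos (m * (2*pi/3 - h)) = - cos (m * h)"
    and sin_eq: "sin (m * (2*pi/3 - h)) = sin (m * h)"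
  shows "h ^ 2 * (882/125 * m ^ 3 - 117/5 * m - 28) \<le> S n (2*pi/3 - h)"
proof -
  define x where "x = 2*pi/3 - h"
  define s where "s = sin (x/2)"
  define c where "c = cos (x/2)"
  define v where "v = m * h"
  have m: "0 < m" "0 \<le> v" "v \<le> 1/5"
    using assms(2,4) unfolding m_def v_def by simp_all
  have s: "4/5 \<le> s"
    using sin_half_2pi_3_minus_ge[of h] sqrt_3_bounds(1) assms(2,3)
    unfolding s_def x_def by linarith
  have c: "0 \<le> c" "c \<le> 1/2 + h/2"
    using cos_half_2pi_3_minus_ge[of h] cos_half_2pi_3_minus_le[of h] assms(2,3)
    unfolding c_def x_def by simp_all
  have "S n x = 18 * (m * (s * (2 * c - 1))) + 18 * (m * (s * (1 - cos v)))
                - 27 * (c * sin v) + S_rest x"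
    using S_half_angle_form[of n x] cos_eq sin_eq
    unfolding m_def s_def c_def v_def x_def by (simp add: algebra_simps)
  moreover have "m * (3/4 * h - 55/100 * h ^ 2) \<le> m * (s * (2 * c - 1))"
    using sin_half_mult_two_cos_half_minus_one_ge[of h] assms(2,3) m
    unfolding s_def c_def x_def by (intro mult_left_mono) auto
  moreover have "m * (4/5 * (49/100 * v ^ 2)) \<le> m * (s * (1 - cos v))"
    using one_minus_cos_ge[of v] s m by (intro mult_left_mono mult_mono) auto
  moreover have "c * sin v \<le> (1/2 + h/2) * v"
    using sin_x_le_x[of v] sin_ge_zero[of v] pi_ge_two c m by (intro mult_mono) auto
  moreover have "- 28 * h ^ 2 \<le> S_rest x"
    using S_rest_near_2pi_3_ge[of h] assms(2,3) unfolding x_def by simp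
  ultimately have "18 * (m * (3/4 * h - 55/100 * h ^ 2)) + 18 * (m * (4/5 * (49/100 * v ^ 2)))
                     - 27 * ((1/2 + h/2) * v) - 28 * h ^ 2 \<le> S n x"
    by linarith
  \<comment> \<open>the terms linear in \<open>h\<close> cancel\<close>
  moreover have "18 * (m * (3/4 * h - 55/100 * h ^ 2)) + 18 * (m * (4/5 * (49/100 * v ^ 2)))
                   - 27 * ((1/2 + h/2) * v) - 28 * h ^ 2
                 = h ^ 2 * (882/125 * m ^ 3 - 117/5 * m - 28)"
    unfolding v_def by (simp add: algebra_simps power2_eq_square power3_eq_cube)
  ultimately show ?thesis
    unfolding x_def by simp
qed

lemma S_pos_near_2pi_3_if_phase_reflected:
  assumes "21 \<le> n" "0 < h" "h \<le> 1/100" "(real n + 3/2) * h \<le> 1/5"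
    and "cos ((real n + 3/2) * (2*pi/3 - h)) = - cos ((real n + 3/2) * h)"
    and "sin ((real n + 3/2) * (2*pi/3 - h)) = sin ((real n + 3/2) * h)"
  shows "0 < S n (2*pi/3 - h)"
proof -
  define m where "m = real n + 3/2"
  have m: "45/2 \<le> m"
    using assms(1) unfolding m_def by simp
  then have "(45/2) * (45/2) * m \<le> m * m * m"
    by (intro mult_right_mono mult_mono) auto
  then have "0 < 882/125 * m ^ 3 - 117/5 * m - 28"
    using m unfolding power3_eq_cube by linarith
  then have "0 < h ^ 2 * (882/125 * m ^ 3 - 117/5 * m - 28)"
    using assms(2) by simp
  then show ?thesis
    using S_2pi_3_minus_ge_if_phase_reflected[of h n] assms(2-) unfolding m_def by linarith
qed

lemma S_pos_near_2pi_3_if_cos_nonneg: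
  assumes "21 \<le> n" "0 < h" "h \<le> 1/100" "0 \<le> cos ((real n + 3/2) * (2*pi/3 - h))"
  shows "0 < S n (2*pi/3 - h)"
proof (rule S_pos_if_cos_nonneg)
  show "4/5 \<le> sin ((2*pi/3 - h) / 2)"
    using sin_half_2pi_3_minus_ge[of h] sqrt_3_bounds(1) assms(2,3) by linarith
  show "49/100 \<le> cos ((2*pi/3 - h) / 2)"
    using cos_half_2pi_3_minus_ge[of h] assms(2,3) by simp
qed (use assms in simp_all)

lemma S_pos_near_2pi_3:
  assumes "21 \<le> n" "0 < h" "(real n + 3/2) * h < 1/5"
  shows "0 < S n (2*pi/3 - h)"
proof -
  define v where "v = (real n + 3/2) * h"
  define w where "w = (2 * real (n mod 3) + 3) * pi / 3 - v"
  have v: "0 < v" "v < 1/5"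
    using assms unfolding v_def by simp_all
  have "21 * h \<le> real n * h"
    using assms by (intro mult_right_mono) auto
  moreover have "v = real n * h + 3/2 * h"
    unfolding v_def by (simp add: algebra_simps)
  ultimately have h: "h \<le> 1/100"
    using assms(2) v by linarith
  have phase: "cos ((real n + 3/2) * (2*pi/3 - h)) = cos w"
              "sin ((real n + 3/2) * (2*pi/3 - h)) = sin w"
    using phase_2pi_3_minus[of n h] unfolding v_def w_def by simp_all
  consider "n mod 3 = 0" | "n mod 3 = 1" | "n mod 3 = 2"
    by arith
  then show ?thesis
  proof cases
    case 1
    then have "w = pi - v"
      unfolding w_def by simp
    then show ?thesis
      using assms phase h unfolding v_def by (intro S_pos_near_2pi_3_if_phase_reflected) simp_all
  next
    case 2
    then have "w = - (pi/3 + v) + 2 * pi"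
      unfolding w_def by simp
    moreover have "0 \<le> cos (pi/3 + v)"
      using v pi_ge_two by (intro cos_ge_zero) auto
    ultimately show ?thesis
      using assms h phase by (intro S_pos_near_2pi_3_if_cos_nonneg) (simp_all only: cos_periodic cos_minus)
  next
    case 3
    then have "w = (pi/3 - v) + 2 * pi"
      unfolding w_def by simp
    moreover have "0 \<le> cos (pi/3 - v)"
      using v pi_ge_two by (intro cos_ge_zero) auto
    ultimately show ?thesis
      using assms h phase by (intro S_pos_near_2pi_3_if_cos_nonneg) (simp_all only: cos_periodic)
  qed
qed

theorem mainTheorem15:
  fixes n :: nat and x :: real
  assumes "n \<ge> 21"
    and "2.5 / (real n + 2) < x" and "x < 2 * pi / 3"
  shows "S n x > 0"
proof -
  have nx: "5/2 < (real n + 2) * x"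
    using assms(2) by (simp add: divide_less_eq algebra_simps)
  consider "x \<le> 2/5" | "2/5 \<le> x" "x \<le> 9/5"
    | "9/5 \<le> x" "1/5 \<le> (real n + 3/2) * (2*pi/3 - x)" | "(real n + 3/2) * (2*pi/3 - x) < 1/5"
    by linarith
  then show ?thesis
  proof cases
    case 1
    then show ?thesis using S_pos_small_x assms(1) nx by blast
  next
    case 2
    then show ?thesis using S_pos_middle_x assms(1) by blast
  next
    case 3
    then show ?thesis using S_pos_large_x assms(1,3) by blast
  next
    case 4
    then show ?thesis using S_pos_near_2pi_3[of n "2*pi/3 - x"] assms by simp
  qed
qed

end
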